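(* Let $G_m$ be a parametric regulatory network, $R$ a well-formed set of influence constraints, $v\in V$, and $(L,U)$ a pair of parametrisations. Let $M_v=\{(u,v,s)\in R\mid s\in\{-1,+1\}\}$. Then $\nabla_{M_v}(L,U)=(L,U)$ if and only if for all $\omega,\omega'\in\Omega_v$ with $\omega\preceq_v\omega'$ we have $L_{v,\omega}\le L_{v,\omega'}$ and $U_{v,\omega}\le U_{v,\omega'}$.
   Context: An influence graph is $G=(V,I)$, $V=\{1,\dots,n\}$, $I\subseteq V\times V$; regulators $n^-(v)=\{u\mid(u,v)\in I\}$. $m\in\mathbb N^n$, $D_v=\{0,\dots,m_v\}$, PRN $G_m=(G,m)$. Regulator states $\Omega_v=\prod_{u\in n^-(v)}D_u$; $\omega[u\leftarrow k]$ replaces component $u$ of $\omega$ by $k$. Parametrisations: vectors with coordinates $P_{v,\omega}\in D_v$ for $v\in V$, $\omega\in\Omega_v$. $R\subseteq V\times V\times\{+1,-1,\mathrm o\}$ is well-formed if $u\in n^-(v)$ for all $(u,v,c)\in R$ and never both $(u,v,+1),(u,v,-1)\in R$. Order $\preceq_v$ on $\Omega_v$: $\omega\preceq_v\omega'$ iff for all $u\in n^-(v)$, $\omega_u\le\omega'_u$ if $(u,v,+1)\in R$, $\omega_u\ge\omega'_u$ if $(u,v,-1)\in R$, $\omega_u=\omega'_u$ otherwise. For $s\in\{+1,-1\}$, $\nabla_{(u,v,s)}(L,U)$ is the fixpoint of iterating from $(L,U)$ the map $f(L,U)=(L',U')$ with, for all $\omega\in\Omega_v$, $L'_{v,\omega}=\max(\{L_{v,\omega}\}\cup\{L_{v,\omega[u\leftarrow\omega_u-s]}\mid\omega_u-s\in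 D_u\})$ and $U'_{v,\omega}=\min(\{U_{v,\omega}\}\cup\{U_{v,\omega[u\leftarrow\omega_u+s]}\mid\omega_u+s\in D_u\})$, all coordinates of other nodes unchanged. For a set $R'$ of such constraints, $\nabla_{R'}(L,U)$ is the fixpoint of iterating from $(L,U)$ the composition of the operators $\nabla_r$, $r\in R'$. *)

theory Defs
  imports Main "HOL-Library.FuncSet"
begin

text \<open>Nodes are natural numbers; V = {1..n}.  An influence graph is I \<subseteq> V \<times> V,
  m :: nat \<Rightarrow> nat gives the maximal levels (D_v = {0..m v}).\<close>

datatype sign = Pos | Neg | Obs

definition sval :: "sign \<Rightarrow> int" where
  "sval s = (case s of Pos \<Rightarrow> 1 | Neg \<Rightarrow> -1 | Obs \<Rightarrow> 0)"

definition regs :: "(nat \<times> nat) set \<Rightarrow> nat \<Rightarrow> nat set" where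
  "regs I v = {u. (u, v) \<in> I}"

definition Omega :: "(nat \<times> nat) set \<Rightarrow> (nat \<Rightarrow> nat) \<Rightarrow> nat \<Rightarrow> (nat \<Rightarrow> nat) set" where
  "Omega I m v = PiE (regs I v) (\<lambda>u. {0..m u})"

text \<open>A parametrisation assigns P v \<omega> \<in> D_v to each v \<in> V, \<omega> \<in> Omega_v
  (values at other arguments are irrelevant and never changed by the operators).\<close>
type_synonym param = "nat \<Rightarrow> (nat \<Rightarrow> nat) \<Rightarrow> nat"

definition is_param :: "nat \<Rightarrow> (nat \<times> nat) set \<Rightarrow> (nat \<Rightarrow> nat) \<Rightarrow> param \<Rightarrow> bool" where
  "is_param n I m P \<longleftrightarrow> (\<forall>v\<in>{1..n}. \<forall>\<omega>\<in>Omega I m v. P v \<omega> \<le> m v)"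

definition well_formed :: "(nat \<times> nat) set \<Rightarrow> (nat \<times> nat \<times> sign) set \<Rightarrow> bool" where
  "well_formed I R \<longleftrightarrow>
     (\<forall>(u, v, c) \<in> R. u \<in> regs I v) \<and>
     (\<forall>u v. \<not> ((u, v, Pos) \<in> R \<and> (u, v, Neg) \<in> R))"

definition preceq :: "(nat \<times> nat) set \<Rightarrow> (nat \<times> nat \<times> sign) set \<Rightarrow> nat
    \<Rightarrow> (nat \<Rightarrow> nat) \<Rightarrow> (nat \<Rightarrow> nat) \<Rightarrow> bool" where
  "preceq I R v \<omega> \<omega>' \<longleftrightarrow>
     (\<forall>u\<in>regs I v.
        (if (u, v, Pos) \<in> R then \<omega> u \<le> \<omega>' u
         else if (u, v, Neg) \<in> R then \<omega> u \<ge> \<omega>' u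
         else \<omega> u = \<omega>' u))"

definition nabla_step :: "(nat \<times> nat) set \<Rightarrow> (nat \<Rightarrow> nat) \<Rightarrow> nat \<times> nat \<times> sign
    \<Rightarrow> param \<times> param \<Rightarrow> param \<times> param" where
  "nabla_step I m r LU = (case r of (u, v, s) \<Rightarrow> case LU of (L, U) \<Rightarrow>
     ((\<lambda>w \<omega>. if w = v \<and> \<omega> \<in> Omega I m v then
          Max ({L v \<omega>} \<union> {L v (\<omega>(u := nat k)) | k. k = int (\<omega> u) - sval s \<and> 0 \<le> k \<and> k \<le> int (m u)})
        else L w \<omega>),
      (\<lambda>w \<omega>. if w = v \<and> \<omega> \<in> Omega I m v then
          Min ({U v \<omega>} \<union> {U v (\<omega>(u := nat k)) | k. k = int (\<omega> u) + sval s \<and> 0 \<le> k \<and> k \<le> int (m u)})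
        else U w \<omega>)))"

definition iter_fix :: "('a \<Rightarrow> 'a) \<Rightarrow> 'a \<Rightarrow> 'a" where
  "iter_fix f x = (THE y. (\<exists>k. y = (f ^^ k) x) \<and> f y = y)"

definition nabla :: "(nat \<times> nat) set \<Rightarrow> (nat \<Rightarrow> nat) \<Rightarrow> nat \<times> nat \<times> sign
    \<Rightarrow> param \<times> param \<Rightarrow> param \<times> param" where
  "nabla I m r = iter_fix (nabla_step I m r)"

text \<open>\<nabla>_{R'} for a set R' enumerated by a list rs (composition in list order).\<close>
definition nabla_set :: "(nat \<times> nat) set \<Rightarrow> (nat \<Rightarrow> nat) \<Rightarrow> (nat \<times> nat \<times> sign) list
    \<Rightarrow> param \<times> param \<Rightarrow> param \<times> param" where
  "nabla_set I m rs = iter_fix (\<lambda>p. fold (nabla I m) rs p)"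

definition M_of :: "(nat \<times> nat \<times> sign) set \<Rightarrow> nat \<Rightarrow> (nat \<times> nat \<times> sign) set" where
  "M_of R v = {(u, w, s) \<in> R. w = v \<and> s \<in> {Pos, Neg}}"

end

theory Submission
  imports Defs
begin

text \<open>An elementary operator for a constraint (u, v, s) only raises L and lowers U on the
  window Omega_v of node v, and keeps L bounded by m_v; so the sum of m_v - L and U over the window
  strictly decreases until a fixpoint is reached. Hence all the iterations terminate, and since
  this narrowing order is antisymmetric, the composed operator leaves (L, U) unchanged exactly
  when every elementary step does. A step for (u, v, +1) (resp. -1) fixes (L, U) iff L_v and U_v
  do not decrease (resp. do not increase) when the level of u goes up by one. Any two states
  comparable for the order on Omega_v are joined by a chain of single-coordinate changes that stay
  comparable, so unit-step monotonicity along all constraints of M_v is equivalent to monotonicity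
  with respect to that order.\<close>

lemma iter_fix_eq_funpow:
  assumes "f ((f ^^ k) x) = (f ^^ k) x"
  shows "iter_fix f x = (f ^^ k) x"
  unfolding iter_fix_def
proof (rule the_equality)
  fix y assume "(\<exists>j. y = (f ^^ j) x) \<and> f y = y"
  then obtain j where y: "y = (f ^^ j) x" and "f y = y" by blast
  have fixed: "(f ^^ i) z = z" if "f z = z" for i z
    using that by (induction i) auto
  show "y = (f ^^ k) x"
  proof (cases "j \<le> k")
    case True
    then have "(f ^^ k) x = (f ^^ (k - j)) y"
      unfolding y by (metis funpow_add le_add_diff_inverse2 comp_apply)
    with fixed \<open>f y = y\<close> show ?thesis by simp
  next
    case False
    then have "y = (f ^^ (j - k)) ((f ^^ k) x)"
      unfolding y by (metis funpow_add le_add_diff_inverse2 comp_apply nat_le_linear)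
    with fixed assms show ?thesis by simp
  qed
qed (use assms in blast)

lemma iter_fix_fixpoint: "f x = x \<Longrightarrow> iter_fix f x = x"
  using iter_fix_eq_funpow[of f 0 x] by simp

lemma funpow_reaches_fixpoint:
  fixes \<mu> :: "'a \<Rightarrow> nat"
  assumes "\<And>x. P x \<Longrightarrow> P (f x)"
    and "\<And>x. P x \<Longrightarrow> f x \<noteq> x \<Longrightarrow> \<mu> (f x) < \<mu> x"
    and "P x"
  shows "\<exists>k. f ((f ^^ k) x) = (f ^^ k) x"
  using assms(3)
proof (induction "\<mu> x" arbitrary: x rule: less_induct)
  case less
  show ?case
  proof (cases "f x = x")
    case True
    then show ?thesis by (intro exI[of _ 0]) simp
  next
    case False
    with less assms(1,2) obtain k where "f ((f ^^ k) (f x)) = (f ^^ k) (f x)" by blast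
    then show ?thesis by (intro exI[of _ "Suc k"]) (simp add: funpow_Suc_right del: funpow.simps)
  qed
qed

lemma max_override_eq_self_iff:
  fixes P :: "'a \<Rightarrow> 'b \<Rightarrow> 'c::linorder"
  shows "(\<lambda>w \<omega>. if w = v \<and> C \<omega> then max (P v \<omega>) (X \<omega>) else P w \<omega>) = P \<longleftrightarrow> (\<forall>\<omega>. C \<omega> \<longrightarrow> X \<omega> \<le> P v \<omega>)"
    (is "?f = P \<longleftrightarrow> _")
proof
  assume eq: "?f = P"
  have "X \<omega> \<le> P v \<omega>" if "C \<omega>" for \<omega>
  proof -
    have "max (P v \<omega>) (X \<omega>) = P v \<omega>"
      using fun_cong[OF fun_cong[OF eq, of v], of \<omega>] that by simp
    then show ?thesis
      by (metis max.cobounded2)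
  qed
  then show "\<forall>\<omega>. C \<omega> \<longrightarrow> X \<omega> \<le> P v \<omega>"
    by blast
qed (auto simp: fun_eq_iff max_absorb1)

lemma min_override_eq_self_iff:
  fixes P :: "'a \<Rightarrow> 'b \<Rightarrow> 'c::linorder"
  shows "(\<lambda>w \<omega>. if w = v \<and> C \<omega> then min (P v \<omega>) (X \<omega>) else P w \<omega>) = P \<longleftrightarrow> (\<forall>\<omega>. C \<omega> \<longrightarrow> P v \<omega> \<le> X \<omega>)"
    (is "?f = P \<longleftrightarrow> _")
proof
  assume eq: "?f = P"
  have "P v \<omega> \<le> X \<omega>" if "C \<omega>" for \<omega>
  proof -
    have "min (P v \<omega>) (X \<omega>) = P v \<omega>"
      using fun_cong[OF fun_cong[OF eq, of v], of \<omega>] that by simp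
    then show ?thesis
      by (metis min.cobounded2)
  qed
  then show "\<forall>\<omega>. C \<omega> \<longrightarrow> P v \<omega> \<le> X \<omega>"
    by blast
qed (auto simp: fun_eq_iff min_absorb1)

definition narrows :: "nat \<Rightarrow> (nat \<Rightarrow> nat) set \<Rightarrow> param \<times> param \<Rightarrow> param \<times> param \<Rightarrow> bool" where
  "narrows v W p q \<longleftrightarrow>
     (\<forall>w \<omega>. w \<noteq> v \<or> \<omega> \<notin> W \<longrightarrow> fst q w \<omega> = fst p w \<omega> \<and> snd q w \<omega> = snd p w \<omega>) \<and>
     (\<forall>\<omega>\<in>W. fst p v \<omega> \<le> fst q v \<omega> \<and> snd q v \<omega> \<le> snd p v \<omega>)"

definition lower_at_most :: "nat \<Rightarrow> (nat \<Rightarrow> nat) set \<Rightarrow> nat \<Rightarrow> param \<times> param \<Rightarrow> bool" where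
  "lower_at_most v W B p \<longleftrightarrow> (\<forall>\<omega>\<in>W. fst p v \<omega> \<le> B)"

definition narrowing_map :: "nat \<Rightarrow> (nat \<Rightarrow> nat) set \<Rightarrow> nat \<Rightarrow> (param \<times> param \<Rightarrow> param \<times> param) \<Rightarrow> bool" where
  "narrowing_map v W B f \<longleftrightarrow>
     (\<forall>p. lower_at_most v W B p \<longrightarrow> narrows v W p (f p) \<and> lower_at_most v W B (f p))"

lemma narrowing_mapD:
  "narrowing_map v W B f \<Longrightarrow> lower_at_most v W B p \<Longrightarrow>
    narrows v W p (f p) \<and> lower_at_most v W B (f p)"
  unfolding narrowing_map_def by blast

lemma narrows_refl: "narrows v W p p"
  by (simp add: narrows_def)

lemma narrows_trans: "narrows v W p q \<Longrightarrow> narrows v W q r \<Longrightarrow> narrows v W p r"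
  unfolding narrows_def by (smt (verit) order_trans)

lemma narrows_antisym:
  assumes "narrows v W p q" and "narrows v W q p"
  shows "p = q"
proof -
  have "fst p w \<omega> = fst q w \<omega> \<and> snd p w \<omega> = snd q w \<omega>" for w \<omega>
    using assms unfolding narrows_def by (cases "w = v \<and> \<omega> \<in> W") (auto intro: antisym)
  then show ?thesis by (simp add: prod_eq_iff fun_eq_iff)
qed

definition width :: "nat \<Rightarrow> (nat \<Rightarrow> nat) set \<Rightarrow> nat \<Rightarrow> param \<times> param \<Rightarrow> nat" where
  "width v W B p = (\<Sum>\<omega>\<in>W. B - fst p v \<omega>) + (\<Sum>\<omega>\<in>W. snd p v \<omega>)"

lemma width_less_if_narrows:
  assumes "finite W" and pq: "narrows v W p q" and "p \<noteq> q" and B: "lower_at_most v W B q"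
  shows "width v W B q < width v W B p"
proof -
  have "\<exists>\<omega>\<in>W. fst p v \<omega> \<noteq> fst q v \<omega> \<or> snd p v \<omega> \<noteq> snd q v \<omega>"
  proof (rule ccontr)
    assume "\<not> ?thesis"
    with pq have "narrows v W q p" unfolding narrows_def by auto
    with pq \<open>p \<noteq> q\<close> show False using narrows_antisym by blast
  qed
  then obtain \<omega> where \<omega>: "\<omega> \<in> W" and "fst p v \<omega> < fst q v \<omega> \<or> snd q v \<omega> < snd p v \<omega>"
    using pq unfolding narrows_def by (metis le_neq_implies_less)
  moreover have "fst q v \<omega> \<le> B"
    using B \<omega> unfolding lower_at_most_def by blast
  ultimately have "B - fst q v \<omega> < B - fst p v \<omega> \<or> snd q v \<omega> < snd p v \<omega>"
    by linarith
  moreover have L: "(\<Sum>\<omega>\<in>W. B - fst q v \<omega>) \<le> (\<Sum>\<omega>\<in>W. B - fst p v \<omega>)"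
    and U: "(\<Sum>\<omega>\<in>W. snd q v \<omega>) \<le> (\<Sum>\<omega>\<in>W. snd p v \<omega>)"
    using pq unfolding narrows_def by (auto intro!: sum_mono diff_le_mono2)
  ultimately consider
      "(\<Sum>\<omega>\<in>W. B - fst q v \<omega>) < (\<Sum>\<omega>\<in>W. B - fst p v \<omega>)"
    | "(\<Sum>\<omega>\<in>W. snd q v \<omega>) < (\<Sum>\<omega>\<in>W. snd p v \<omega>)"
    using pq \<omega> sum_strict_mono_ex1[OF \<open>finite W\<close>] unfolding narrows_def
    by (metis (no_types, lifting) diff_le_mono2)
  then show ?thesis
    using L U unfolding width_def by cases linarith+
qed

lemma narrowing_map_iter_fix:
  assumes "finite W" and f: "narrowing_map v W B f" and p: "lower_at_most v W B p"
  shows "narrows v W p (iter_fix f p) \<and> lower_at_most v W B (iter_fix f p) \<and>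
    f (iter_fix f p) = iter_fix f p"
proof -
  note step = narrowing_mapD[OF f]
  have decreasing: "width v W B (f x) < width v W B x"
    if "lower_at_most v W B x" and "f x \<noteq> x" for x
    using width_less_if_narrows[OF \<open>finite W\<close>, of v x "f x" B] step[OF that(1)] that(2)
    by auto
  obtain k where k: "f ((f ^^ k) p) = (f ^^ k) p"
    using funpow_reaches_fixpoint[of "lower_at_most v W B" f "width v W B", OF _ decreasing p]
      step by blast
  have "narrows v W p ((f ^^ i) p) \<and> lower_at_most v W B ((f ^^ i) p)" for i
  proof (induction i)
    case (Suc i)
    then have "narrows v W ((f ^^ i) p) ((f ^^ Suc i) p)" and "lower_at_most v W B ((f ^^ Suc i) p)"
      using step[of "(f ^^ i) p"] by simp_all
    with Suc show ?case
      using narrows_trans[of v W p "(f ^^ i) p"] by blast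
  qed (simp add: p narrows_refl)
  then show ?thesis
    using iter_fix_eq_funpow[OF k] k by simp
qed

lemma iter_fix_eq_self_iff:
  assumes "finite W" and "narrowing_map v W B f" and "lower_at_most v W B p"
  shows "iter_fix f p = p \<longleftrightarrow> f p = p"
proof
  assume "iter_fix f p = p"
  with narrowing_map_iter_fix[OF assms] show "f p = p" by simp
qed (rule iter_fix_fixpoint)

lemma narrowing_map_iter_fixI:
  assumes "finite W" and "narrowing_map v W B f"
  shows "narrowing_map v W B (iter_fix f)"
  using narrowing_map_iter_fix[OF assms] unfolding narrowing_map_def[of v W B "iter_fix f"]
  by simp

lemma narrowing_map_comp:
  assumes f: "narrowing_map v W B f" and g: "narrowing_map v W B g"
  shows "narrowing_map v W B (g \<circ> f)"
  unfolding narrowing_map_def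
proof (intro allI impI)
  fix p assume "lower_at_most v W B p"
  then have p_fp: "narrows v W p (f p)" and "lower_at_most v W B (f p)"
    using narrowing_mapD[OF f] by blast+
  then have fp_gfp: "narrows v W (f p) (g (f p))" and "lower_at_most v W B (g (f p))"
    using narrowing_mapD[OF g] by blast+
  then show "narrows v W p ((g \<circ> f) p) \<and> lower_at_most v W B ((g \<circ> f) p)"
    using narrows_trans[OF p_fp fp_gfp] by simp
qed

lemma narrowing_map_fold:
  "\<forall>r\<in>set rs. narrowing_map v W B (h r) \<Longrightarrow> narrowing_map v W B (fold h rs)"
proof (induction rs)
  case Nil
  show ?case by (simp add: narrowing_map_def narrows_refl)
next
  case (Cons r rs)
  then have "narrowing_map v W B (h r)" and "narrowing_map v W B (fold h rs)"
    by simp_all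
  then show ?case
    unfolding fold_Cons by (rule narrowing_map_comp)
qed

lemma fold_eq_self_iff:
  assumes "\<forall>r\<in>set rs. narrowing_map v W B (h r)" and "lower_at_most v W B p"
  shows "fold h rs p = p \<longleftrightarrow> (\<forall>r\<in>set rs. h r p = p)"
  using assms
proof (induction rs)
  case (Cons r rs)
  then have IH: "fold h rs p = p \<longleftrightarrow> (\<forall>r\<in>set rs. h r p = p)"
    by simp
  show ?case
  proof
    assume fixed: "fold h (r # rs) p = p"
    have hr: "narrowing_map v W B (h r)" and hs: "narrowing_map v W B (fold h rs)"
      using Cons.prems(1) narrowing_map_fold[of rs v W B h] by simp_all
    then have p_q: "narrows v W p (h r p)" and "lower_at_most v W B (h r p)"
      using narrowing_mapD[OF hr Cons.prems(2)] by blast+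
    then have "narrows v W (h r p) (fold h rs (h r p))"
      using narrowing_mapD[OF hs] by blast
    moreover have "fold h rs (h r p) = p"
      using fixed by simp
    ultimately have "h r p = p"
      using narrows_antisym[OF p_q] by simp
    with fixed IH show "\<forall>r'\<in>set (r # rs). h r' p = p"
      by simp
  qed (use IH in simp)
qed simp

lemma finite_regs: "I \<subseteq> A \<times> A \<Longrightarrow> finite A \<Longrightarrow> finite (regs I v)"
  unfolding regs_def by (auto intro: finite_subset)

lemma finite_Omega: "finite (regs I v) \<Longrightarrow> finite (Omega I m v)"
  unfolding Omega_def by (intro finite_PiE) auto

lemma Omega_le: "\<omega> \<in> Omega I m v \<Longrightarrow> u \<in> regs I v \<Longrightarrow> \<omega> u \<le> m u"
  by (auto simp: Omega_def)

lemma fun_upd_in_Omega: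
  "\<omega> \<in> Omega I m v \<Longrightarrow> u \<in> regs I v \<Longrightarrow> j \<le> m u \<Longrightarrow> \<omega>(u := j) \<in> Omega I m v"
  by (auto simp: Omega_def PiE_def extensional_def)

lemma neighbour_set_eq:
  "{P (\<omega>(u := nat k)) | k. k = e \<and> 0 \<le> k \<and> k \<le> int M} =
    (if 0 \<le> e \<and> e \<le> int M then {P (\<omega>(u := nat e))} else {})"
  by auto

lemma nabla_step_eq:
  "nabla_step I m (u, v, s) (L, U) =
    (\<lambda>w \<omega>. if w = v \<and> \<omega> \<in> Omega I m v \<and> 0 \<le> int (\<omega> u) - sval s \<and> int (\<omega> u) - sval s \<le> int (m u)
       then max (L v \<omega>) (L v (\<omega>(u := nat (int (\<omega> u) - sval s)))) else L w \<omega>,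
     \<lambda>w \<omega>. if w = v \<and> \<omega> \<in> Omega I m v \<and> 0 \<le> int (\<omega> u) + sval s \<and> int (\<omega> u) + sval s \<le> int (m u)
       then min (U v \<omega>) (U v (\<omega>(u := nat (int (\<omega> u) + sval s)))) else U w \<omega>)"
  unfolding nabla_step_def neighbour_set_eq by (auto simp: fun_eq_iff)

lemma nabla_step_narrowing:
  assumes "u \<in> regs I v"
  shows "narrowing_map v (Omega I m v) B (nabla_step I m (u, v, s))"
  unfolding narrowing_map_def
proof (intro allI impI)
  fix p :: "param \<times> param"
  assume B: "lower_at_most v (Omega I m v) B p"
  obtain L U where p: "p = (L, U)"
    by fastforce
  have "L v (\<omega>(u := j)) \<le> B" if "\<omega> \<in> Omega I m v" and "j \<le> m u" for \<omega> j
    using B fun_upd_in_Omega[OF that(1) assms that(2)] unfolding p lower_at_most_def by simp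
  then show "narrows v (Omega I m v) p (nabla_step I m (u, v, s) p) \<and>
      lower_at_most v (Omega I m v) B (nabla_step I m (u, v, s) p)"
    using B unfolding p nabla_step_eq narrows_def lower_at_most_def by auto
qed

lemma shift_down_iff_shift_up:
  assumes "u \<in> regs I v"
  shows "(\<forall>\<omega>\<in>Omega I m v. 0 < \<omega> u \<longrightarrow> Q (\<omega>(u := \<omega> u - 1)) \<omega>) \<longleftrightarrow>
    (\<forall>\<omega>\<in>Omega I m v. \<omega> u < m u \<longrightarrow> Q \<omega> (\<omega>(u := Suc (\<omega> u))))"
proof
  assume down: "\<forall>\<omega>\<in>Omega I m v. 0 < \<omega> u \<longrightarrow> Q (\<omega>(u := \<omega> u - 1)) \<omega>"
  show "\<forall>\<omega>\<in>Omega I m v. \<omega> u < m u \<longrightarrow> Q \<omega> (\<omega>(u := Suc (\<omega> u)))"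
  proof (intro ballI impI)
    fix \<omega> assume "\<omega> \<in> Omega I m v" and "\<omega> u < m u"
    then have "\<omega>(u := Suc (\<omega> u)) \<in> Omega I m v"
      using fun_upd_in_Omega assms by simp
    then show "Q \<omega> (\<omega>(u := Suc (\<omega> u)))"
      using down by fastforce
  qed
next
  assume up: "\<forall>\<omega>\<in>Omega I m v. \<omega> u < m u \<longrightarrow> Q \<omega> (\<omega>(u := Suc (\<omega> u)))"
  show "\<forall>\<omega>\<in>Omega I m v. 0 < \<omega> u \<longrightarrow> Q (\<omega>(u := \<omega> u - 1)) \<omega>"
  proof (intro ballI impI)
    fix \<omega> assume \<omega>: "\<omega> \<in> Omega I m v" and "0 < \<omega> u"
    moreover have "\<omega> u \<le> m u"
      using Omega_le[OF \<omega> assms] .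
    ultimately have "\<omega>(u := \<omega> u - 1) \<in> Omega I m v" and "\<omega> u - 1 < m u"
      using fun_upd_in_Omega assms by simp_all
    then show "Q (\<omega>(u := \<omega> u - 1)) \<omega>"
      using up \<open>0 < \<omega> u\<close> by fastforce
  qed
qed

definition monotone_along :: "(nat \<times> nat) set \<Rightarrow> (nat \<Rightarrow> nat) \<Rightarrow> nat \<Rightarrow> nat \<Rightarrow> sign \<Rightarrow> param \<Rightarrow> bool" where
  "monotone_along I m u v s P \<longleftrightarrow>
     (\<forall>\<omega>\<in>Omega I m v. \<omega> u < m u \<longrightarrow>
        (if s = Neg then P v (\<omega>(u := Suc (\<omega> u))) \<le> P v \<omega> else P v \<omega> \<le> P v (\<omega>(u := Suc (\<omega> u)))))"

lemma nabla_step_fixed_iff: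
  assumes u: "u \<in> regs I v" and s: "s \<in> {Pos, Neg}"
  shows "nabla_step I m (u, v, s) (L, U) = (L, U) \<longleftrightarrow>
    monotone_along I m u v s L \<and> monotone_along I m u v s U"
proof -
  have nat_shift: "nat (int k - 1) = k - 1" "nat (int k + 1) = Suc k" for k :: nat
    by linarith+
  have "nabla_step I m (u, v, s) (L, U) = (L, U) \<longleftrightarrow>
    (\<forall>\<omega>\<in>Omega I m v. 0 \<le> int (\<omega> u) - sval s \<and> int (\<omega> u) - sval s \<le> int (m u) \<longrightarrow>
        L v (\<omega>(u := nat (int (\<omega> u) - sval s))) \<le> L v \<omega>) \<and>
    (\<forall>\<omega>\<in>Omega I m v. 0 \<le> int (\<omega> u) + sval s \<and> int (\<omega> u) + sval s \<le> int (m u) \<longrightarrow>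
        U v \<omega> \<le> U v (\<omega>(u := nat (int (\<omega> u) + sval s))))"
    (is "_ \<longleftrightarrow> ?local")
    unfolding nabla_step_eq prod.inject
      max_override_eq_self_iff[where P = L] min_override_eq_self_iff[where P = U]
    by (simp only: Ball_def imp_conjL)
  also have "\<dots> \<longleftrightarrow> monotone_along I m u v s L \<and> monotone_along I m u v s U"
    using s
  proof (elim insertE emptyE)
    assume "s = Pos"
    then have "?local \<longleftrightarrow>
      (\<forall>\<omega>\<in>Omega I m v. 0 < \<omega> u \<longrightarrow> L v (\<omega>(u := \<omega> u - 1)) \<le> L v \<omega>) \<and>
      (\<forall>\<omega>\<in>Omega I m v. \<omega> u < m u \<longrightarrow> U v \<omega> \<le> U v (\<omega>(u := Suc (\<omega> u))))"
      by (intro conj_cong ball_cong refl) (auto simp: sval_def nat_shift dest: Omega_le[OF _ u])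
    then show ?thesis
      unfolding shift_down_iff_shift_up[OF u, of m "\<lambda>\<omega> \<omega>'. L v \<omega> \<le> L v \<omega>'"] monotone_along_def
      using \<open>s = Pos\<close> by simp
  next
    assume "s = Neg"
    then have "?local \<longleftrightarrow>
      (\<forall>\<omega>\<in>Omega I m v. \<omega> u < m u \<longrightarrow> L v (\<omega>(u := Suc (\<omega> u))) \<le> L v \<omega>) \<and>
      (\<forall>\<omega>\<in>Omega I m v. 0 < \<omega> u \<longrightarrow> U v \<omega> \<le> U v (\<omega>(u := \<omega> u - 1)))"
      by (intro conj_cong ball_cong refl) (auto simp: sval_def nat_shift dest: Omega_le[OF _ u])
    then show ?thesis
      unfolding shift_down_iff_shift_up[OF u, of m "\<lambda>\<omega> \<omega>'. U v \<omega>' \<le> U v \<omega>"] monotone_along_def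
      using \<open>s = Neg\<close> by simp
  qed
  finally show ?thesis .
qed

lemma preceq_fun_upd_iff:
  assumes "u \<in> regs I v"
  shows "preceq I R v \<omega> (\<omega>(u := j)) \<longleftrightarrow>
    (if (u, v, Pos) \<in> R then \<omega> u \<le> j else if (u, v, Neg) \<in> R then j \<le> \<omega> u else \<omega> u = j)"
  using assms unfolding preceq_def by auto

lemma monotone_along_fun_upd:
  assumes mono: "monotone_along I m u v s P" and u: "u \<in> regs I v" and \<omega>: "\<omega> \<in> Omega I m v"
    and "\<omega> u \<le> j" and "j \<le> m u"
  shows "if s = Neg then P v (\<omega>(u := j)) \<le> P v \<omega> else P v \<omega> \<le> P v (\<omega>(u := j))"
proof -
  define g where "g k = P v (\<omega>(u := k))" for k
  have step: "if s = Neg then g (Suc k) \<le> g k else g k \<le> g (Suc k)" if "k \<in> {\<omega> u..<m u}" for k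
  proof -
    have "\<omega>(u := k) \<in> Omega I m v"
      using fun_upd_in_Omega[OF \<omega> u] that by simp
    then show ?thesis
      using mono that unfolding monotone_along_def g_def by fastforce
  qed
  have ivl: "{\<omega> u..<j} \<subseteq> {\<omega> u..<m u}"
    using \<open>j \<le> m u\<close> by auto
  have "g (\<omega> u) = P v \<omega>" and "g j = P v (\<omega>(u := j))"
    by (simp_all add: g_def)
  moreover have "g j \<le> g (\<omega> u)" if "s = Neg"
    using lift_Suc_antimono_le_ivl[of "{\<omega> u..<m u}" g, OF _ \<open>\<omega> u \<le> j\<close> ivl] step that by simp
  moreover have "g (\<omega> u) \<le> g j" if "s \<noteq> Neg"
    using lift_Suc_mono_le_ivl[of "{\<omega> u..<m u}" g, OF _ \<open>\<omega> u \<le> j\<close> ivl] step that by simp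
  ultimately show ?thesis
    by simp
qed

lemma monotone_if_monotone_in_each_coordinate:
  fixes F :: "(nat \<Rightarrow> nat) \<Rightarrow> 'a::preorder"
  assumes "finite (regs I v)"
    and coordinate: "\<And>\<omega> u j. \<omega> \<in> Omega I m v \<Longrightarrow> u \<in> regs I v \<Longrightarrow> j \<le> m u \<Longrightarrow>
      preceq I R v \<omega> (\<omega>(u := j)) \<Longrightarrow> F \<omega> \<le> F (\<omega>(u := j))"
    and "\<omega> \<in> Omega I m v" and \<omega>': "\<omega>' \<in> Omega I m v" and "preceq I R v \<omega> \<omega>'"
  shows "F \<omega> \<le> F \<omega>'"
  using assms(3,5)
proof (induction "card {x \<in> regs I v. \<omega> x \<noteq> \<omega>' x}" arbitrary: \<omega> rule: less_induct)
  case less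
  show ?case
  proof (cases "\<omega> = \<omega>'")
    case False
    then obtain u where u: "u \<in> regs I v" and "\<omega> u \<noteq> \<omega>' u"
      using PiE_ext less.prems(1) \<omega>' unfolding Omega_def by blast
    define \<omega>1 where "\<omega>1 = \<omega>(u := \<omega>' u)"
    have "\<omega>' u \<le> m u"
      using Omega_le[OF \<omega>' u] .
    then have \<omega>1: "\<omega>1 \<in> Omega I m v"
      unfolding \<omega>1_def using fun_upd_in_Omega[OF less.prems(1) u] by simp
    have "if (u, v, Pos) \<in> R then \<omega> u \<le> \<omega>' u
        else if (u, v, Neg) \<in> R then \<omega>' u \<le> \<omega> u else \<omega> u = \<omega>' u"
      using less.prems(2) u unfolding preceq_def by blast
    then have "preceq I R v \<omega> \<omega>1"
      unfolding \<omega>1_def preceq_fun_upd_iff[OF u] .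
    then have "F \<omega> \<le> F \<omega>1"
      unfolding \<omega>1_def using coordinate less.prems(1) u \<open>\<omega>' u \<le> m u\<close> by blast
    also have "F \<omega>1 \<le> F \<omega>'"
    proof (rule less.hyps[OF _ \<omega>1])
      have "{x \<in> regs I v. \<omega>1 x \<noteq> \<omega>' x} = {x \<in> regs I v. \<omega> x \<noteq> \<omega>' x} - {u}"
        unfolding \<omega>1_def by auto
      moreover have "finite {x \<in> regs I v. \<omega> x \<noteq> \<omega>' x}"
        using \<open>finite (regs I v)\<close> by simp
      moreover have "u \<in> {x \<in> regs I v. \<omega> x \<noteq> \<omega>' x}"
        using u \<open>\<omega> u \<noteq> \<omega>' u\<close> by blast
      ultimately show "card {x \<in> regs I v. \<omega>1 x \<noteq> \<omega>' x} < card {x \<in> regs I v. \<omega> x \<noteq> \<omega>' x}"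
        by (metis card_Diff1_less)
      show "preceq I R v \<omega>1 \<omega>'"
        using less.prems(2) unfolding \<omega>1_def preceq_def by auto
    qed
    finally show ?thesis .
  qed simp
qed

lemma preceq_fun_upd_mono:
  assumes wf: "well_formed I R"
    and mono: "\<forall>(u, w, s)\<in>M_of R v. monotone_along I m u v s P"
    and \<omega>: "\<omega> \<in> Omega I m v" and u: "u \<in> regs I v" and "j \<le> m u"
    and le: "preceq I R v \<omega> (\<omega>(u := j))"
  shows "P v \<omega> \<le> P v (\<omega>(u := j))"
proof -
  consider "(u, v, Pos) \<in> R" "\<omega> u \<le> j" | "(u, v, Neg) \<in> R" "(u, v, Pos) \<notin> R" "j \<le> \<omega> u" | "\<omega> u = j"
    using le unfolding preceq_fun_upd_iff[OF u] by (auto split: if_splits)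
  then show ?thesis
  proof cases
    case 1
    then have "monotone_along I m u v Pos P"
      using mono unfolding M_of_def by auto
    then show ?thesis
      using monotone_along_fun_upd[OF _ u \<omega> \<open>\<omega> u \<le> j\<close> \<open>j \<le> m u\<close>] by simp
  next
    case 2
    then have "monotone_along I m u v Neg P"
      using mono unfolding M_of_def by auto
    moreover have "\<omega>(u := j) \<in> Omega I m v"
      using fun_upd_in_Omega[OF \<omega> u \<open>j \<le> m u\<close>] .
    moreover have "\<omega> u \<le> m u"
      using Omega_le[OF \<omega> u] .
    ultimately show ?thesis
      using monotone_along_fun_upd[of I m u v Neg P "\<omega>(u := j)" "\<omega> u"] u \<open>j \<le> \<omega> u\<close> by simp
  next
    case 3
    then have "\<omega>(u := j) = \<omega>"
      by auto
    then show ?thesis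
      by simp
  qed
qed

lemma monotone_iff_monotone_along:
  assumes wf: "well_formed I R" and "finite (regs I v)"
  shows "(\<forall>\<omega>\<in>Omega I m v. \<forall>\<omega>'\<in>Omega I m v. preceq I R v \<omega> \<omega>' \<longrightarrow> P v \<omega> \<le> P v \<omega>') \<longleftrightarrow>
    (\<forall>(u, w, s)\<in>M_of R v. monotone_along I m u v s P)"
proof
  assume mono: "\<forall>\<omega>\<in>Omega I m v. \<forall>\<omega>'\<in>Omega I m v. preceq I R v \<omega> \<omega>' \<longrightarrow> P v \<omega> \<le> P v \<omega>'"
  show "\<forall>(u, w, s)\<in>M_of R v. monotone_along I m u v s P"
  proof (clarify)
    fix u w s assume "(u, w, s) \<in> M_of R v"
    then have "w = v" and s: "s \<in> {Pos, Neg}" and uvs: "(u, v, s) \<in> R"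
      unfolding M_of_def by auto
    have u: "u \<in> regs I v" and not_both: "\<not> ((u, v, Pos) \<in> R \<and> (u, v, Neg) \<in> R)"
      using wf uvs unfolding well_formed_def by auto
    show "monotone_along I m u v s P"
      unfolding monotone_along_def
    proof (intro ballI impI)
      fix \<omega> assume \<omega>: "\<omega> \<in> Omega I m v" and "\<omega> u < m u"
      define \<omega>1 where "\<omega>1 = \<omega>(u := Suc (\<omega> u))"
      have \<omega>1: "\<omega>1 \<in> Omega I m v"
        unfolding \<omega>1_def using fun_upd_in_Omega[OF \<omega> u] \<open>\<omega> u < m u\<close> by simp
      have "preceq I R v \<omega> \<omega>1" if "s = Pos"
        unfolding \<omega>1_def preceq_fun_upd_iff[OF u] using uvs that by simp
      moreover have "preceq I R v \<omega>1 \<omega>" if "s = Neg"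
      proof -
        have "\<omega> = \<omega>1(u := \<omega> u)"
          unfolding \<omega>1_def by simp
        then show ?thesis
          using uvs that not_both preceq_fun_upd_iff[OF u, of R \<omega>1 "\<omega> u"]
          unfolding \<omega>1_def by simp
      qed
      ultimately show "if s = Neg then P v \<omega>1 \<le> P v \<omega> else P v \<omega> \<le> P v \<omega>1"
        using mono \<omega> \<omega>1 s by auto
    qed
  qed
next
  assume "\<forall>(u, w, s)\<in>M_of R v. monotone_along I m u v s P"
  then show "\<forall>\<omega>\<in>Omega I m v. \<forall>\<omega>'\<in>Omega I m v. preceq I R v \<omega> \<omega>' \<longrightarrow> P v \<omega> \<le> P v \<omega>'"
    using monotone_if_monotone_in_each_coordinate[OF \<open>finite (regs I v)\<close>]
      preceq_fun_upd_mono[OF wf] by blast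
qed

lemma nabla_set_eq_self_iff:
  assumes fin: "finite (Omega I m v)" and rs: "\<forall>(u, w, s)\<in>set rs. w = v \<and> u \<in> regs I v"
    and p: "lower_at_most v (Omega I m v) B p"
  shows "nabla_set I m rs p = p \<longleftrightarrow> (\<forall>r\<in>set rs. nabla_step I m r p = p)"
proof -
  have step: "narrowing_map v (Omega I m v) B (nabla_step I m r)" if "r \<in> set rs" for r
    using rs that nabla_step_narrowing by fastforce
  then have nabla: "\<forall>r\<in>set rs. narrowing_map v (Omega I m v) B (nabla I m r)"
    unfolding nabla_def using narrowing_map_iter_fixI[OF fin] by blast
  have "nabla_set I m rs p = p \<longleftrightarrow> fold (nabla I m) rs p = p"
    unfolding nabla_set_def by (rule iter_fix_eq_self_iff[OF fin narrowing_map_fold[OF nabla] p])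
  also have "\<dots> \<longleftrightarrow> (\<forall>r\<in>set rs. nabla I m r p = p)"
    by (rule fold_eq_self_iff[OF nabla p])
  also have "\<dots> \<longleftrightarrow> (\<forall>r\<in>set rs. nabla_step I m r p = p)"
    unfolding nabla_def using iter_fix_eq_self_iff[OF fin step p] by simp
  finally show ?thesis .
qed

theorem lemma4:
  fixes n :: nat and I :: "(nat \<times> nat) set" and m :: "nat \<Rightarrow> nat"
    and R :: "(nat \<times> nat \<times> sign) set" and v :: nat and L U :: param
    and rs :: "(nat \<times> nat \<times> sign) list"
  assumes "I \<subseteq> {1..n} \<times> {1..n}"
    and "well_formed I R"
    and "v \<in> {1..n}"
    and "is_param n I m L" and "is_param n I m U"
    and "set rs = M_of R v"
  shows "nabla_set I m rs (L, U) = (L, U) \<longleftrightarrow>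
    (\<forall>\<omega>\<in>Omega I m v. \<forall>\<omega>'\<in>Omega I m v. preceq I R v \<omega> \<omega>' \<longrightarrow>
        L v \<omega> \<le> L v \<omega>' \<and> U v \<omega> \<le> U v \<omega>')"
proof -
  have fin_regs: "finite (regs I v)"
    using finite_regs[OF assms(1)] by simp
  then have fin: "finite (Omega I m v)"
    by (rule finite_Omega)
  have M_regs: "u \<in> regs I v \<and> s \<in> {Pos, Neg}" if "(u, w, s) \<in> M_of R v" for u w s
    using that assms(2) unfolding M_of_def well_formed_def by auto
  then have rs: "\<forall>(u, w, s)\<in>set rs. w = v \<and> u \<in> regs I v"
    using assms(6) unfolding M_of_def by auto
  \<comment> \<open>Termination needs an upper bound only for L: U only decreases, within nat.\<close>
  have B: "lower_at_most v (Omega I m v) (m v) (L, U)"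
    using assms(3,4) unfolding is_param_def lower_at_most_def by simp
  have "nabla_set I m rs (L, U) = (L, U) \<longleftrightarrow> (\<forall>r\<in>M_of R v. nabla_step I m r (L, U) = (L, U))"
    using nabla_set_eq_self_iff[OF fin rs B] assms(6) by simp
  also have "\<dots> \<longleftrightarrow>
      (\<forall>(u, w, s)\<in>M_of R v. monotone_along I m u v s L \<and> monotone_along I m u v s U)"
    using M_regs nabla_step_fixed_iff unfolding M_of_def by fastforce
  also have "\<dots> \<longleftrightarrow> (\<forall>\<omega>\<in>Omega I m v. \<forall>\<omega>'\<in>Omega I m v. preceq I R v \<omega> \<omega>' \<longrightarrow>
      L v \<omega> \<le> L v \<omega>' \<and> U v \<omega> \<le> U v \<omega>')"
    using monotone_iff_monotone_along[OF assms(2) fin_regs, of m L]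
      monotone_iff_monotone_along[OF assms(2) fin_regs, of m U] by blast
  finally show ?thesis .
qed

end
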